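(* Let $n\in\mathbb N$, $\tau\in\mathbb R$ with $t_n(\tau)>0$, and $u,v\in\mathbb R$. (1) The function $\mathbb R\ni\alpha\mapsto\mathrm{Re}\,\phi_{n,\tau}(\alpha+iy_{t_n(\tau),\mu_n}(\alpha),u)$ attains its unique local minimum at $\alpha=\mathrm{Re}\,w$, where $w=F_{t_n(\tau),\mu_n}\left(x_n(\tau)+\frac{u}{c_2n^{2/3}}\right)$; it is strictly decreasing for $\alpha<\mathrm{Re}\,w$ and strictly increasing for $\alpha>\mathrm{Re}\,w$. (2) For any $\alpha\in\mathbb R$, the function $[0,\infty)\ni\beta\mapsto\mathrm{Re}\,\phi_{n,\tau}(\alpha+i\beta,v)$ attains its unique local maximum at $\beta=y_{t_n(\tau),\mu_n}(\alpha)$, is strictly increasing for $0<\beta<y_{t_n(\tau),\mu_n}(\alpha)$ and strictly decreasing for $\beta>y_{t_n(\tau),\mu_n}(\alpha)$.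
   Context: $\mu_n=\frac1n\sum_j\delta_{x_j^{(n)}}$ is a discrete probability measure; $g_{\mu_n}(z)=\int\log(z-s)d\mu_n(s)$ (principal branch, so $\mathrm{Re}\,g_{\mu_n}(z)=\int\log|z-s|d\mu_n(s)$); $G_{\mu_n}(z)=\int\frac{d\mu_n(s)}{z-s}$. Constants $t_{\rm cr}>0$, $c_2>0$, $G_0\in\mathbb R$, $x^*\in\mathbb R$ are fixed; $t_n(\tau)=t_{\rm cr}+\frac{2\tau}{c_2^2n^{1/3}}$, $x_n(\tau)=x^*+t_n(\tau)G_0$. Phase function: $\phi_{n,\tau}(z,v)=\frac{n}{2t_n(\tau)}\left(z-x_n(\tau)-\frac{v}{c_2n^{2/3}}\right)^2+ng_{\mu_n}(z)$. For $t>0$: $y_{t,\mu_n}(x)=\inf\{y>0:\int\frac{d\mu_n(s)}{(x-s)^2+y^2}\le\frac1t\}$, $H_{t,\mu_n}(z)=z+tG_{\mu_n}(z)$, which maps the curve $\{x+iy_{t,\mu_n}(x):x\in\mathbb R\}$ bijectively onto $\mathbb R$; $F_{t,\mu_n}$ is its inverse. *)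

theory Defs
  imports "HOL-Analysis.Analysis" "HOL-Library.Extended_Real"
begin

text \<open>The discrete measure mu_n = (1/n) sum_{j<n} delta_{x j}; its atoms are x 0, ..., x (n-1).\<close>

definition Gmu :: "nat \<Rightarrow> (nat \<Rightarrow> real) \<Rightarrow> complex \<Rightarrow> complex" where
  "Gmu n x z = (\<Sum>j<n. 1 / (z - complex_of_real (x j))) / of_nat n"

definition gmu :: "nat \<Rightarrow> (nat \<Rightarrow> real) \<Rightarrow> complex \<Rightarrow> complex" where
  "gmu n x z = (\<Sum>j<n. Ln (z - complex_of_real (x j))) / of_nat n"

definition ymu :: "nat \<Rightarrow> (nat \<Rightarrow> real) \<Rightarrow> real \<Rightarrow> real \<Rightarrow> real" where
  "ymu n x t a = Inf {y. y > 0 \<and> (\<Sum>j<n. 1 / ((a - x j)^2 + y^2)) / real n \<le> 1 / t}"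

definition Hmu :: "nat \<Rightarrow> (nat \<Rightarrow> real) \<Rightarrow> real \<Rightarrow> complex \<Rightarrow> complex" where
  "Hmu n x t z = z + complex_of_real t * Gmu n x z"

definition ycurve :: "nat \<Rightarrow> (nat \<Rightarrow> real) \<Rightarrow> real \<Rightarrow> complex set" where
  "ycurve n x t = {Complex a (ymu n x t a) | a. True}"

definition Fmu :: "nat \<Rightarrow> (nat \<Rightarrow> real) \<Rightarrow> real \<Rightarrow> real \<Rightarrow> complex" where
  "Fmu n x t u = (THE z. z \<in> ycurve n x t \<and> Hmu n x t z = complex_of_real u)"

definition tn :: "real \<Rightarrow> real \<Rightarrow> nat \<Rightarrow> real \<Rightarrow> real" where
  "tn tcr c2 n \<tau> = tcr + 2 * \<tau> / (c2^2 * real n powr (1/3))"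

definition xn :: "real \<Rightarrow> real \<Rightarrow> real \<Rightarrow> real \<Rightarrow> nat \<Rightarrow> real \<Rightarrow> real" where
  "xn xstar G0 tcr c2 n \<tau> = xstar + tn tcr c2 n \<tau> * G0"

definition phi :: "nat \<Rightarrow> (nat \<Rightarrow> real) \<Rightarrow> real \<Rightarrow> real \<Rightarrow> real \<Rightarrow> real \<Rightarrow> real
                   \<Rightarrow> complex \<Rightarrow> real \<Rightarrow> complex" where
  "phi n x tcr c2 G0 xstar \<tau> z v =
     of_real (real n / (2 * tn tcr c2 n \<tau>)) *
       (z - of_real (xn xstar G0 tcr c2 n \<tau>) - of_real (v / (c2 * real n powr (2/3))))^2
     + of_nat n * gmu n x z"

text \<open>Re phi, as an extended real: equal to -infinity at the atoms of mu_n
  (where log|z - s| = -infinity), and Re (phi ...) elsewhere.\<close>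
definition RePhi :: "nat \<Rightarrow> (nat \<Rightarrow> real) \<Rightarrow> real \<Rightarrow> real \<Rightarrow> real \<Rightarrow> real \<Rightarrow> real
                   \<Rightarrow> complex \<Rightarrow> real \<Rightarrow> ereal" where
  "RePhi n x tcr c2 G0 xstar \<tau> z v =
     (if \<exists>j<n. z = complex_of_real (x j) then -\<infinity>
      else ereal (Re (phi n x tcr c2 G0 xstar \<tau> z v)))"

definition is_local_min_on :: "real set \<Rightarrow> (real \<Rightarrow> 'b::linorder) \<Rightarrow> real \<Rightarrow> bool" where
  "is_local_min_on S f a \<longleftrightarrow> a \<in> S \<and> (\<exists>e>0. \<forall>b\<in>S. \<bar>b - a\<bar> < e \<longrightarrow> f a \<le> f b)"

definition is_local_max_on :: "real set \<Rightarrow> (real \<Rightarrow> 'b::linorder) \<Rightarrow> real \<Rightarrow> bool" where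
  "is_local_max_on S f a \<longleftrightarrow> a \<in> S \<and> (\<exists>e>0. \<forall>b\<in>S. \<bar>b - a\<bar> < e \<longrightarrow> f b \<le> f a)"

end

theory Submission
  imports Defs "HOL-Computational_Algebra.Polynomial"
begin

text \<open>
  Write z = a + i b. On the upper half plane Re phi(z) = n/(2t) ((a - c)^2 - b^2) + (1/2) sum_j ln |z - x_j|^2,
  whose b-derivative is n b (S(a,b) - 1/t) with S(a,b) = int d mu(s) / |z - s|^2 strictly decreasing in b.
  Hence on each vertical line Re phi increases up to b = y(a), where S = 1/t (or y = 0), and decreases
  afterwards; this is part (2).
  Along the curve the b-derivative vanishes, so the a-derivative of a \<mapsto> Re phi(a + i y(a)) is
  n/t (psi(a) - c) with psi(a) = Re H(a + i y(a)) = a + t Re G(a + i y(a)). Implicit differentiation of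
  S(a, y(a)) = 1/t shows psi' > 0 away from the finitely many points where y leaves the real axis, so
  psi is a strictly increasing bijection of the real line and the curve phase decreases before and increases
  after the unique point psi^{-1}(c) = Re F(c); this is part (1).
\<close>

section \<open>Calculus in two real variables\<close>

lemma MVT_between:
  fixes f f' :: "real \<Rightarrow> real"
  assumes "\<And>s. min u v \<le> s \<Longrightarrow> s \<le> max u v \<Longrightarrow> (f has_real_derivative f' s) (at s)"
  shows "\<exists>\<xi>. min u v \<le> \<xi> \<and> \<xi> \<le> max u v \<and> f u - f v = (u - v) * f' \<xi>"
proof -
  consider "u < v" | "u = v" | "v < u" by linarith
  then show ?thesis
  proof cases
    case 1
    then obtain z where "u < z" "z < v" "f v - f u = (v - u) * f' z"
      using MVT2[of u v f f'] assms by (auto simp: min_def max_def)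
    then show ?thesis using 1 by (intro exI[of _ z]) (auto simp: algebra_simps)
  next
    case 3
    then obtain z where "v < z" "z < u" "f u - f v = (u - v) * f' z"
      using MVT2[of v u f f'] assms by (auto simp: min_def max_def)
    then show ?thesis using 3 by (intro exI[of _ z]) (auto simp: algebra_simps)
  next
    case 2
    then show ?thesis by auto
  qed
qed

lemma difference_quotient_partial:
  fixes \<Phi> \<phi> :: "real \<Rightarrow> real \<Rightarrow> real"
  assumes "open U" "(a0, b0) \<in> U"
    and der: "\<And>s b. (s, b) \<in> U \<Longrightarrow> ((\<lambda>s. \<Phi> s b) has_real_derivative \<phi> s b) (at s)"
    and cont: "isCont (\<lambda>p. \<phi> (fst p) (snd p)) (a0, b0)"
    and u: "(u \<longlongrightarrow> a0) F" and v: "(v \<longlongrightarrow> a0) F" and w: "(w \<longlongrightarrow> b0) F"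
  obtains M where "(M \<longlongrightarrow> \<phi> a0 b0) F"
    and "\<forall>\<^sub>F i in F. \<Phi> (u i) (w i) - \<Phi> (v i) (w i) = (u i - v i) * M i"
proof -
  obtain A B where AB: "open A" "open B" "a0 \<in> A" "b0 \<in> B" "A \<times> B \<subseteq> U"
    by (rule open_prod_elim[OF assms(1,2)]) auto
  obtain e where e: "e > 0" "ball a0 e \<subseteq> A"
    by (rule openE[OF AB(1,3)])
  have "\<forall>\<^sub>F i in F. u i \<in> ball a0 e" "\<forall>\<^sub>F i in F. v i \<in> ball a0 e" "\<forall>\<^sub>F i in F. w i \<in> B"
    using topological_tendstoD[OF u open_ball] topological_tendstoD[OF v open_ball]
      topological_tendstoD[OF w AB(2,4)] e(1) by simp_all
  then have near: "\<forall>\<^sub>F i in F. u i \<in> ball a0 e \<and> v i \<in> ball a0 e \<and> w i \<in> B"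
    by (intro eventually_conj)
  define P where "P i \<xi> \<longleftrightarrow> min (u i) (v i) \<le> \<xi> \<and> \<xi> \<le> max (u i) (v i) \<and>
      \<Phi> (u i) (w i) - \<Phi> (v i) (w i) = (u i - v i) * \<phi> \<xi> (w i)" for i \<xi>
  define \<xi> where "\<xi> i = (SOME z. P i z)" for i
  have P_\<xi>: "\<forall>\<^sub>F i in F. P i (\<xi> i)"
    using near
  proof eventually_elim
    case (elim i)
    have "(s, w i) \<in> U" if "min (u i) (v i) \<le> s" "s \<le> max (u i) (v i)" for s
    proof -
      have "a0 - e < min (u i) (v i)" "max (u i) (v i) < a0 + e"
        using elim by (auto simp: dist_real_def)
      then have "s \<in> ball a0 e"
        using that by (auto simp: dist_real_def abs_less_iff min_le_iff_disj le_max_iff_disj)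
      then show ?thesis using e(2) AB(5) elim by blast
    qed
    then have "\<exists>z. P i z" unfolding P_def by (intro MVT_between der) simp
    then show ?case unfolding \<xi>_def by (rule someI_ex)
  qed
  have "(\<xi> \<longlongrightarrow> a0) F"
  proof (rule tendsto_sandwich[of "\<lambda>i. min (u i) (v i)" _ _ "\<lambda>i. max (u i) (v i)"])
    show "\<forall>\<^sub>F i in F. min (u i) (v i) \<le> \<xi> i" "\<forall>\<^sub>F i in F. \<xi> i \<le> max (u i) (v i)"
      using P_\<xi> by (auto elim: eventually_mono simp: P_def)
  qed (use tendsto_min[OF u v] tendsto_max[OF u v] in simp_all)
  then have "((\<lambda>i. \<phi> (\<xi> i) (w i)) \<longlongrightarrow> \<phi> a0 b0) F"
    using isCont_tendsto_compose[OF cont tendsto_Pair[OF _ w]] by simp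
  moreover have "\<forall>\<^sub>F i in F. \<Phi> (u i) (w i) - \<Phi> (v i) (w i) = (u i - v i) * \<phi> (\<xi> i) (w i)"
    using P_\<xi> by (auto elim: eventually_mono simp: P_def)
  ultimately show ?thesis using that by blast
qed

lemma increment_by_partials:
  fixes \<Phi> \<phi>a \<phi>b :: "real \<Rightarrow> real \<Rightarrow> real" and g :: "real \<Rightarrow> real"
  assumes U: "open U" "(a0, g a0) \<in> U"
    and der_a: "\<And>s b. (s, b) \<in> U \<Longrightarrow> ((\<lambda>s. \<Phi> s b) has_real_derivative \<phi>a s b) (at s)"
    and der_b: "\<And>s b. (s, b) \<in> U \<Longrightarrow> ((\<lambda>b. \<Phi> s b) has_real_derivative \<phi>b s b) (at b)"
    and cont_a: "isCont (\<lambda>p. \<phi>a (fst p) (snd p)) (a0, g a0)"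
    and cont_b: "isCont (\<lambda>p. \<phi>b (fst p) (snd p)) (a0, g a0)"
    and g: "isCont g a0"
  obtains M1 M2 where "(M1 \<longlongrightarrow> \<phi>a a0 (g a0)) (at a0)" "(M2 \<longlongrightarrow> \<phi>b a0 (g a0)) (at a0)"
    and "\<forall>\<^sub>F a in at a0. \<Phi> a (g a) - \<Phi> a0 (g a0) = (a - a0) * M1 a + (g a - g a0) * M2 a"
proof -
  have g_lim: "(g \<longlongrightarrow> g a0) (at a0)"
    using g by (simp add: isCont_def)
  obtain M1 where M1: "(M1 \<longlongrightarrow> \<phi>a a0 (g a0)) (at a0)"
    "\<forall>\<^sub>F a in at a0. \<Phi> a (g a0) - \<Phi> a0 (g a0) = (a - a0) * M1 a"
    by (rule difference_quotient_partial[OF U der_a cont_a tendsto_ident_at tendsto_const tendsto_const])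
  have V: "open (prod.swap -` U)" "(g a0, a0) \<in> prod.swap -` U"
    using U by (auto intro: open_vimage continuous_on_swap)
  have "isCont ((\<lambda>p. \<phi>b (fst p) (snd p)) \<circ> prod.swap) (g a0, a0)"
    by (rule continuous_at_compose) (simp_all add: isCont_swap cont_b)
  then have cont_b': "isCont (\<lambda>p. \<phi>b (snd p) (fst p)) (g a0, a0)"
    by (simp add: o_def)
  have der_b': "((\<lambda>b. \<Phi> s b) has_real_derivative \<phi>b s b) (at b)" if "(b, s) \<in> prod.swap -` U" for b s
    using der_b that by simp
  obtain M2 where M2: "(M2 \<longlongrightarrow> \<phi>b a0 (g a0)) (at a0)"
    "\<forall>\<^sub>F a in at a0. \<Phi> a (g a) - \<Phi> a (g a0) = (g a - g a0) * M2 a"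
    by (rule difference_quotient_partial[where \<Phi>="\<lambda>b s. \<Phi> s b" and \<phi>="\<lambda>b s. \<phi>b s b",
        OF V der_b' cont_b' g_lim tendsto_const tendsto_ident_at])
  from M1(2) M2(2)
  have "\<forall>\<^sub>F a in at a0. \<Phi> a (g a) - \<Phi> a0 (g a0) = (a - a0) * M1 a + (g a - g a0) * M2 a"
    by eventually_elim simp
  with M1(1) M2(1) that show ?thesis by blast
qed

lemma DERIV_compose_partials:
  fixes \<Phi> \<phi>a \<phi>b :: "real \<Rightarrow> real \<Rightarrow> real" and g :: "real \<Rightarrow> real"
  assumes "open U" "(a0, g a0) \<in> U"
    and "\<And>s b. (s, b) \<in> U \<Longrightarrow> ((\<lambda>s. \<Phi> s b) has_real_derivative \<phi>a s b) (at s)"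
    and "\<And>s b. (s, b) \<in> U \<Longrightarrow> ((\<lambda>b. \<Phi> s b) has_real_derivative \<phi>b s b) (at b)"
    and "isCont (\<lambda>p. \<phi>a (fst p) (snd p)) (a0, g a0)"
    and "isCont (\<lambda>p. \<phi>b (fst p) (snd p)) (a0, g a0)"
    and g: "(g has_real_derivative g') (at a0)"
  shows "((\<lambda>a. \<Phi> a (g a)) has_real_derivative \<phi>a a0 (g a0) + \<phi>b a0 (g a0) * g') (at a0)"
proof -
  obtain M1 M2 where M: "(M1 \<longlongrightarrow> \<phi>a a0 (g a0)) (at a0)" "(M2 \<longlongrightarrow> \<phi>b a0 (g a0)) (at a0)"
    "\<forall>\<^sub>F a in at a0. \<Phi> a (g a) - \<Phi> a0 (g a0) = (a - a0) * M1 a + (g a - g a0) * M2 a"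
    using increment_by_partials[OF assms(1-6) DERIV_isCont[OF g]] by blast
  have "\<forall>\<^sub>F a in at a0. (\<Phi> a (g a) - \<Phi> a0 (g a0)) / (a - a0)
      = M1 a + (g a - g a0) / (a - a0) * M2 a"
    using M(3) eventually_neq_at_within[of a0 a0 UNIV]
    by eventually_elim (auto simp: field_simps)
  moreover have "((\<lambda>a. M1 a + (g a - g a0) / (a - a0) * M2 a)
      \<longlongrightarrow> \<phi>a a0 (g a0) + g' * \<phi>b a0 (g a0)) (at a0)"
    using g unfolding has_field_derivative_iff by (intro tendsto_intros M)
  ultimately show ?thesis
    unfolding has_field_derivative_iff by (simp add: tendsto_cong mult.commute)
qed

lemma DERIV_implicit_partials:
  fixes \<Phi> \<phi>a \<phi>b :: "real \<Rightarrow> real \<Rightarrow> real" and g :: "real \<Rightarrow> real"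
  assumes "open U" "(a0, g a0) \<in> U"
    and "\<And>s b. (s, b) \<in> U \<Longrightarrow> ((\<lambda>s. \<Phi> s b) has_real_derivative \<phi>a s b) (at s)"
    and "\<And>s b. (s, b) \<in> U \<Longrightarrow> ((\<lambda>b. \<Phi> s b) has_real_derivative \<phi>b s b) (at b)"
    and "isCont (\<lambda>p. \<phi>a (fst p) (snd p)) (a0, g a0)"
    and "isCont (\<lambda>p. \<phi>b (fst p) (snd p)) (a0, g a0)"
    and "isCont g a0"
    and level: "\<forall>\<^sub>F a in at a0. \<Phi> a (g a) = \<Phi> a0 (g a0)"
    and nz: "\<phi>b a0 (g a0) \<noteq> 0"
  shows "(g has_real_derivative - \<phi>a a0 (g a0) / \<phi>b a0 (g a0)) (at a0)"
proof -
  obtain M1 M2 where M: "(M1 \<longlongrightarrow> \<phi>a a0 (g a0)) (at a0)" "(M2 \<longlongrightarrow> \<phi>b a0 (g a0)) (at a0)"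
    "\<forall>\<^sub>F a in at a0. \<Phi> a (g a) - \<Phi> a0 (g a0) = (a - a0) * M1 a + (g a - g a0) * M2 a"
    using increment_by_partials[OF assms(1-7)] by blast
  have "\<forall>\<^sub>F a in at a0. M2 a \<noteq> 0"
    using tendsto_imp_eventually_ne[OF M(2) nz] .
  then have "\<forall>\<^sub>F a in at a0. (g a - g a0) / (a - a0) = - M1 a / M2 a"
    using M(3) level eventually_neq_at_within[of a0 a0 UNIV]
    by eventually_elim (auto simp: field_simps)
  moreover have "((\<lambda>a. - M1 a / M2 a) \<longlongrightarrow> - \<phi>a a0 (g a0) / \<phi>b a0 (g a0)) (at a0)"
    using nz by (intro tendsto_intros M)
  ultimately show ?thesis
    unfolding has_field_derivative_iff by (simp add: tendsto_cong)
qed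

lemma DERIV_pos_imp_increasing_finite_exceptions:
  fixes f :: "real \<Rightarrow> real"
  assumes "a < b" and "finite E" and cont: "continuous_on {a..b} f"
    and der: "\<And>s. a < s \<Longrightarrow> s < b \<Longrightarrow> s \<notin> E \<Longrightarrow> \<exists>d. DERIV f s :> d \<and> d > 0"
  shows "f a < f b"
  using assms(1) cont der
proof (induction "card (E \<inter> {a<..<b})" arbitrary: a b rule: less_induct)
  case (less a b)
  show ?case
  proof (cases "E \<inter> {a<..<b} = {}")
    case True
    show ?thesis
    proof (rule DERIV_pos_imp_increasing_open[OF less.prems(1) _ less.prems(2)])
      fix s assume "a < s" "s < b"
      with True show "\<exists>d. DERIV f s :> d \<and> d > 0"
        by (intro less.prems(3)) auto
    qed
  next
    case False
    then obtain s where s: "s \<in> E" "a < s" "s < b" by auto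
    have "E \<inter> {a<..<s} \<subset> E \<inter> {a<..<b}" "E \<inter> {s<..<b} \<subset> E \<inter> {a<..<b}"
      using s by auto
    then have card: "card (E \<inter> {a<..<s}) < card (E \<inter> {a<..<b})"
      "card (E \<inter> {s<..<b}) < card (E \<inter> {a<..<b})"
      using \<open>finite E\<close> by (simp_all add: psubset_card_mono)
    have "f a < f s"
    proof (rule less.hyps[OF card(1) s(2)])
      show "continuous_on {a..s} f"
        using s by (intro continuous_on_subset[OF less.prems(2)]) auto
    qed (use s in \<open>auto intro: less.prems(3)\<close>)
    also have "f s < f b"
    proof (rule less.hyps[OF card(2) s(3)])
      show "continuous_on {s..b} f"
        using s by (intro continuous_on_subset[OF less.prems(2)]) auto
    qed (use s in \<open>auto intro: less.prems(3)\<close>)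
    finally show ?thesis .
  qed
qed

lemma DERIV_neg_imp_decreasing_finite_exceptions:
  fixes f :: "real \<Rightarrow> real"
  assumes "a < b" and "finite E" and "continuous_on {a..b} f"
    and der: "\<And>s. a < s \<Longrightarrow> s < b \<Longrightarrow> s \<notin> E \<Longrightarrow> \<exists>d. DERIV f s :> d \<and> d < 0"
  shows "f b < f a"
proof -
  have "- f a < - f b"
  proof (rule DERIV_pos_imp_increasing_finite_exceptions[OF assms(1,2)])
    show "continuous_on {a..b} (\<lambda>s. - f s)"
      using assms(3) by (rule continuous_on_minus)
    fix s assume "a < s" "s < b" "s \<notin> E"
    with der obtain d where "DERIV f s :> d" "d < 0" by blast
    then show "\<exists>d. DERIV (\<lambda>s. - f s) s :> d \<and> d > 0"
      by (intro exI[of _ "- d"]) (auto intro: DERIV_minus)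
  qed
  then show ?thesis by simp
qed

lemma local_min_of_decreasing_increasing:
  fixes f :: "real \<Rightarrow> 'b::linorder"
  assumes dec: "\<And>a b. a < b \<Longrightarrow> b \<le> m \<Longrightarrow> f b < f a"
    and inc: "\<And>a b. m \<le> a \<Longrightarrow> a < b \<Longrightarrow> f a < f b"
  shows "is_local_min_on UNIV f m" and "\<And>a. is_local_min_on UNIV f a \<Longrightarrow> a = m"
    and "strict_antimono_on {..<m} f" and "strict_mono_on {m<..} f"
proof -
  have "f m \<le> f a" for a
    using dec[of a m] inc[of m a] by (cases a m rule: linorder_cases) auto
  then show "is_local_min_on UNIV f m"
    unfolding is_local_min_on_def by (auto intro: exI[of _ 1])
next
  fix a assume "is_local_min_on UNIV f a"
  then obtain e where e: "e > 0" "\<And>b. \<bar>b - a\<bar> < e \<Longrightarrow> f a \<le> f b"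
    unfolding is_local_min_on_def by auto
  show "a = m"
  proof (rule ccontr)
    assume "a \<noteq> m"
    then consider "a < m" | "m < a" by linarith
    then show False
    proof cases
      case 1
      then have "f (min (a + e/2) m) < f a" "f a \<le> f (min (a + e/2) m)"
        using dec[of a "min (a + e/2) m"] e by auto
      then show False by simp
    next
      case 2
      then have "f (max (a - e/2) m) < f a" "f a \<le> f (max (a - e/2) m)"
        using inc[of "max (a - e/2) m" a] e by auto
      then show False by simp
    qed
  qed
next
  show "strict_antimono_on {..<m} f"
    by (rule monotone_onI) (use dec in auto)
  show "strict_mono_on {m<..} f"
    by (rule strict_mono_onI) (use inc in auto)
qed

lemma local_max_of_increasing_decreasing:
  fixes f :: "real \<Rightarrow> 'b::linorder"
  assumes "lo \<le> m"
    and inc: "\<And>a b. lo \<le> a \<Longrightarrow> a < b \<Longrightarrow> b \<le> m \<Longrightarrow> f a < f b"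
    and dec: "\<And>a b. m \<le> a \<Longrightarrow> a < b \<Longrightarrow> f b < f a"
  shows "is_local_max_on {lo..} f m" and "\<And>a. is_local_max_on {lo..} f a \<Longrightarrow> a = m"
    and "strict_mono_on {lo<..<m} f" and "strict_antimono_on {m<..} f"
proof -
  have "f a \<le> f m" if "lo \<le> a" for a
    using inc[of a m] dec[of m a] that by (cases a m rule: linorder_cases) auto
  then show "is_local_max_on {lo..} f m"
    unfolding is_local_max_on_def using \<open>lo \<le> m\<close> by (auto intro: exI[of _ 1])
next
  fix a assume "is_local_max_on {lo..} f a"
  then obtain e where e: "lo \<le> a" "e > 0" "\<And>b. lo \<le> b \<Longrightarrow> \<bar>b - a\<bar> < e \<Longrightarrow> f b \<le> f a"
    unfolding is_local_max_on_def by auto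
  show "a = m"
  proof (rule ccontr)
    assume "a \<noteq> m"
    then consider "a < m" | "m < a" by linarith
    then show False
    proof cases
      case 1
      then have "f a < f (min (a + e/2) m)" "f (min (a + e/2) m) \<le> f a"
        using inc[of a "min (a + e/2) m"] e by auto
      then show False by simp
    next
      case 2
      then have "f a < f (max (a - e/2) m)" "f (max (a - e/2) m) \<le> f a"
        using dec[of "max (a - e/2) m" a] e \<open>lo \<le> m\<close> by auto
      then show False by simp
    qed
  qed
next
  show "strict_mono_on {lo<..<m} f"
    by (rule strict_mono_onI) (use inc in auto)
  show "strict_antimono_on {m<..} f"
    by (rule monotone_onI) (use dec in auto)
qed

lemma DERIV_inverse_sqdist_fst:
  fixes a b c :: real
  assumes "(a - c)^2 + b^2 \<noteq> 0"
  shows "((\<lambda>s. 1 / ((s - c)^2 + b^2)) has_real_derivative - (2 * (a - c)) / ((a - c)^2 + b^2)^2) (at a)"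
  using assms by (auto intro!: derivative_eq_intros simp: field_simps power2_eq_square)

lemma DERIV_inverse_sqdist_snd:
  fixes b u :: real
  assumes "u^2 + b^2 \<noteq> 0"
  shows "((\<lambda>b. 1 / (u^2 + b^2)) has_real_derivative - 2 * b * (1 / (u^2 + b^2)^2)) (at b)"
  using assms by (auto intro!: derivative_eq_intros simp: field_simps power2_eq_square)

lemma DERIV_ratio_sqdist_fst:
  fixes a b c :: real
  assumes "(a - c)^2 + b^2 \<noteq> 0"
  shows "((\<lambda>s. (s - c) / ((s - c)^2 + b^2)) has_real_derivative
    2 * b^2 * (1 / ((a - c)^2 + b^2)^2) - 1 / ((a - c)^2 + b^2)) (at a)"
proof -
  have "((\<lambda>s. (s - c) / ((s - c)^2 + b^2)) has_real_derivative
      (b^2 - (a - c)^2) / ((a - c)^2 + b^2)^2) (at a)"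
    using assms by (auto intro!: derivative_eq_intros simp: field_simps power2_eq_square)
  moreover have "(b^2 - (a - c)^2) / D^2 = 2 * b^2 * (1 / D^2) - 1 / D"
    if "D = (a - c)^2 + b^2" for D
  proof -
    have "b^2 - (a - c)^2 = 2 * b^2 - D" using that by simp
    then show ?thesis using assms that by (simp add: field_simps power2_eq_square)
  qed
  ultimately show ?thesis by (rule DERIV_cong) simp
qed

lemma DERIV_ratio_sqdist_snd:
  fixes b u :: real
  assumes "u^2 + b^2 \<noteq> 0"
  shows "((\<lambda>b. u / (u^2 + b^2)) has_real_derivative b * (- (2 * u) / (u^2 + b^2)^2)) (at b)"
  using assms by (auto intro!: derivative_eq_intros simp: field_simps power2_eq_square)

lemma DERIV_ln_sqdist_fst:
  fixes a b c :: real
  assumes "(a - c)^2 + b^2 > 0"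
  shows "((\<lambda>s. ln ((s - c)^2 + b^2)) has_real_derivative 2 * ((a - c) / ((a - c)^2 + b^2))) (at a)"
  using assms by (auto intro!: derivative_eq_intros simp: field_simps power2_eq_square)

lemma DERIV_ln_sqdist_snd:
  fixes b u :: real
  assumes "u^2 + b^2 > 0"
  shows "((\<lambda>b. ln (u^2 + b^2)) has_real_derivative 2 * b * (1 / (u^2 + b^2))) (at b)"
  using assms by (auto intro!: derivative_eq_intros simp: field_simps power2_eq_square)

section \<open>The curve of the measure with atoms \<open>x 0, \<dots>, x (n - 1)\<close>\<close>

text \<open>
  The point a + i b is \<open>Complex a b\<close>; \<open>off_atoms a b\<close> says that it is not an atom, and
  \<open>Gmu n x (Complex a b) = Complex (R a b) (- b * S a b)\<close> (lemma \<open>Gmu_Complex\<close>).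
\<close>

locale atom_curve =
  fixes n :: nat and x :: "nat \<Rightarrow> real" and t :: real
  assumes n_ge_1: "n \<ge> 1" and t_pos: "t > 0"
begin

definition off_atoms :: "real \<Rightarrow> real \<Rightarrow> bool" where
  "off_atoms a b \<longleftrightarrow> \<not> (b = 0 \<and> (\<exists>j<n. a = x j))"

definition S :: "real \<Rightarrow> real \<Rightarrow> real" where
  "S a b = (\<Sum>j<n. 1 / ((a - x j)^2 + b^2)) / real n"

definition R :: "real \<Rightarrow> real \<Rightarrow> real" where
  "R a b = (\<Sum>j<n. (a - x j) / ((a - x j)^2 + b^2)) / real n"

definition y :: "real \<Rightarrow> real" where
  "y = ymu n x t"

lemma n_pos: "real n > 0"
  using n_ge_1 by simp

lemma t_nonzero: "t \<noteq> 0"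
  using t_pos by simp

lemma atoms_nonempty: "{..<n} \<noteq> {}"
  using n_ge_1 by (auto simp: lessThan_empty_iff)

lemma off_atoms_nonzero: "b \<noteq> 0 \<Longrightarrow> off_atoms a b"
  by (simp add: off_atoms_def)

lemma off_atoms_dist_pos: "off_atoms a b \<Longrightarrow> j < n \<Longrightarrow> (a - x j)^2 + b^2 > 0"
  by (auto simp: off_atoms_def sum_power2_gt_zero_iff)

lemma off_atoms_dist_nonzero: "off_atoms a b \<Longrightarrow> j < n \<Longrightarrow> (a - x j)^2 + b^2 \<noteq> 0"
  using off_atoms_dist_pos by fastforce

lemma open_off_atoms: "open {p. off_atoms (fst p) (snd p)}"
proof -
  have "{p. off_atoms (fst p) (snd p)} = - ((\<lambda>j. (x j, 0)) ` {..<n})"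
    by (auto simp: off_atoms_def)
  then show ?thesis
    by (simp add: open_Compl finite_imp_closed)
qed

lemma isCont_S [continuous_intros]:
  fixes f g :: "'a::t2_space \<Rightarrow> real"
  assumes "isCont f z" "isCont g z" "off_atoms (f z) (g z)"
  shows "isCont (\<lambda>z. S (f z) (g z)) z"
  unfolding S_def
  by (intro continuous_intros assms(1,2)) (use off_atoms_dist_nonzero[OF assms(3)] n_pos in auto)

lemma S_strict_antimono:
  assumes "0 \<le> b1" "b1 < b2" "off_atoms a b1"
  shows "S a b2 < S a b1"
proof -
  have "(\<Sum>j<n. 1 / ((a - x j)^2 + b2^2)) < (\<Sum>j<n. 1 / ((a - x j)^2 + b1^2))"
  proof (rule sum_strict_mono)
    fix j assume "j \<in> {..<n}"
    moreover have "b1^2 < b2^2"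
      using assms by (simp add: power_strict_mono)
    ultimately show "1 / ((a - x j)^2 + b2^2) < 1 / ((a - x j)^2 + b1^2)"
      using off_atoms_dist_pos[OF assms(3), of j] by (simp add: divide_strict_left_mono)
  qed (use atoms_nonempty in auto)
  then show ?thesis
    unfolding S_def using n_pos by (simp add: divide_strict_right_mono)
qed

lemma S_sqrt_t: "S a (sqrt t) \<le> 1 / t"
proof -
  have "(\<Sum>j<n. 1 / ((a - x j)^2 + (sqrt t)^2)) \<le> real n * (1 / t)"
    using sum_bounded_above[of "{..<n}" "\<lambda>j. 1 / ((a - x j)^2 + (sqrt t)^2)" "1 / t"] t_pos
    by (simp add: frac_le)
  then show ?thesis
    unfolding S_def using n_pos by (simp add: divide_le_eq mult.commute)
qed

lemma y_eq_Inf: "y a = Inf {b. b > 0 \<and> S a b \<le> 1 / t}"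
  by (simp add: y_def ymu_def S_def)

lemma S_tendsto_nhds: "off_atoms a b \<Longrightarrow> ((\<lambda>z. S a z) \<longlongrightarrow> S a b) (nhds b)"
  using isCont_S[where f="\<lambda>_. a" and g="\<lambda>z. z" and z=b] by (simp add: isCont_def tendsto_at_iff_tendsto_nhds)

lemma y_lower: "b > 0 \<Longrightarrow> S a b \<le> 1 / t \<Longrightarrow> y a \<le> b"
  unfolding y_eq_Inf by (rule cInf_lower) (auto intro: bdd_belowI[of _ 0])

lemma y_greatest:
  assumes "\<And>z. z > 0 \<Longrightarrow> S a z \<le> 1 / t \<Longrightarrow> b \<le> z"
  shows "b \<le> y a"
  unfolding y_eq_Inf using assms S_sqrt_t[of a] t_pos
  by (intro cInf_greatest) (auto intro!: exI[of _ "sqrt t"])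

lemma y_nonneg: "0 \<le> y a"
  by (rule y_greatest) simp

lemma y_le_iff:
  assumes "b > 0"
  shows "y a \<le> b \<longleftrightarrow> S a b \<le> 1 / t"
proof
  assume "y a \<le> b"
  show "S a b \<le> 1 / t"
  proof (rule ccontr)
    assume "\<not> S a b \<le> 1 / t"
    then have "\<forall>\<^sub>F z in nhds b. S a z > 1 / t"
      using order_tendstoD(1)[OF S_tendsto_nhds] assms off_atoms_nonzero by simp
    then obtain d where d: "d > 0" "\<And>z. dist z b < d \<Longrightarrow> S a z > 1 / t"
      unfolding eventually_nhds_metric by blast
    have "S a (b + d/2) > 1 / t"
      using d by (simp add: dist_real_def)
    have "b + d/2 \<le> y a"
    proof (rule y_greatest)
      fix z assume z: "z > 0" "S a z \<le> 1 / t"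
      show "b + d/2 \<le> z"
      proof (rule ccontr)
        assume "\<not> b + d/2 \<le> z"
        then have "S a (b + d/2) < S a z"
          using z by (intro S_strict_antimono off_atoms_nonzero) auto
        with z \<open>S a (b + d/2) > 1 / t\<close> show False by simp
      qed
    qed
    with \<open>y a \<le> b\<close> d show False by simp
  qed
qed (use assms y_lower in auto)

lemma y_less_iff:
  assumes "b > 0"
  shows "y a < b \<longleftrightarrow> S a b < 1 / t"
proof
  assume "S a b < 1 / t"
  then have "\<forall>\<^sub>F z in nhds b. S a z < 1 / t"
    using order_tendstoD(2)[OF S_tendsto_nhds] assms off_atoms_nonzero by simp
  then obtain d where d: "d > 0" "\<And>z. dist z b < d \<Longrightarrow> S a z < 1 / t"
    unfolding eventually_nhds_metric by blast
  define z where "z = max (b - d/2) (b/2)"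
  have "z > 0" "z < b" "dist z b < d"
    using d assms by (auto simp: z_def dist_real_def)
  then have "y a \<le> z"
    using d(2) by (intro y_lower) (auto simp: less_imp_le)
  with \<open>z < b\<close> show "y a < b" by simp
next
  assume "y a < b"
  show "S a b < 1 / t"
  proof (rule ccontr)
    assume "\<not> S a b < 1 / t"
    have "b \<le> y a"
    proof (rule y_greatest)
      fix z assume z: "z > 0" "S a z \<le> 1 / t"
      show "b \<le> z"
      proof (rule ccontr)
        assume "\<not> b \<le> z"
        then have "S a b < S a z"
          using z by (intro S_strict_antimono off_atoms_nonzero) auto
        with z \<open>\<not> S a b < 1 / t\<close> show False by simp
      qed
    qed
    with \<open>y a < b\<close> show False by simp
  qed
qed

lemma S_at_y: "y a > 0 \<Longrightarrow> S a (y a) = 1 / t"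
  using y_le_iff[of "y a" a] y_less_iff[of "y a" a] by simp

lemma off_atoms_y: "off_atoms a (y a)"
proof (rule ccontr)
  assume "\<not> off_atoms a (y a)"
  then obtain j where j: "j < n" "a = x j" and "y a = 0"
    by (auto simp: off_atoms_def)
  define b where "b = sqrt (t / (2 * real n))"
  have b: "b > 0" "b^2 = t / (2 * real n)"
    using t_pos n_pos by (auto simp: b_def)
  have "1 / b^2 \<le> (\<Sum>j<n. 1 / ((a - x j)^2 + b^2))"
    using member_le_sum[of j "{..<n}" "\<lambda>j. 1 / ((a - x j)^2 + b^2)"] j by simp
  then have "1 / b^2 / real n \<le> S a b"
    unfolding S_def by (rule divide_right_mono) simp
  moreover have "1 / b^2 / real n = 2 / t"
    using b n_pos t_pos by (simp add: field_simps)
  ultimately have "\<not> S a b \<le> 1 / t"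
    using t_pos by (smt (verit) divide_strict_right_mono)
  with b(1) \<open>y a = 0\<close> y_le_iff[of b a] show False by simp
qed

lemma y_eq_0_iff: "y a = 0 \<longleftrightarrow> off_atoms a 0 \<and> S a 0 \<le> 1 / t"
proof
  assume y0: "y a = 0"
  then have off: "off_atoms a 0" using off_atoms_y[of a] by simp
  have "((\<lambda>b. S a b) \<longlongrightarrow> S a 0) (at_right 0)"
    using S_tendsto_nhds[OF off] by (rule tendsto_mono[rotated]) (simp add: at_within_le_nhds)
  moreover have "\<forall>\<^sub>F b in at_right 0. S a b \<le> 1 / t"
    using eventually_at_right_less[of "0::real"] by eventually_elim (simp add: y_le_iff[symmetric] y0)
  ultimately have "S a 0 \<le> 1 / t"
    by (rule tendsto_upperbound) simp
  with off show "off_atoms a 0 \<and> S a 0 \<le> 1 / t" by simp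
next
  assume off: "off_atoms a 0 \<and> S a 0 \<le> 1 / t"
  show "y a = 0"
  proof (rule ccontr)
    assume "y a \<noteq> 0"
    then have "y a > 0" using y_nonneg[of a] by simp
    then have "S a (y a) < 1 / t"
      using S_strict_antimono[of 0 "y a" a] off by simp
    with \<open>y a > 0\<close> show False using y_less_iff[of "y a" a] by simp
  qed
qed

lemma isCont_y: "isCont y a0"
  unfolding isCont_def
proof (rule order_tendstoI)
  fix l assume l: "y a0 < l"
  then have "l > 0" using y_nonneg[of a0] by simp
  have "((\<lambda>a. S a l) \<longlongrightarrow> S a0 l) (at a0)"
    using isCont_S[where f="\<lambda>a. a" and g="\<lambda>_. l" and z=a0] off_atoms_nonzero \<open>l > 0\<close>
    by (simp add: isCont_def)
  then have "\<forall>\<^sub>F a in at a0. S a l < 1 / t"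
    using l \<open>l > 0\<close> by (intro order_tendstoD(2)) (simp_all add: y_less_iff)
  then show "\<forall>\<^sub>F a in at a0. y a < l"
    by eventually_elim (simp add: y_less_iff \<open>l > 0\<close>)
next
  fix l assume l: "l < y a0"
  show "\<forall>\<^sub>F a in at a0. l < y a"
  proof (cases "l < 0")
    case True
    then show ?thesis using y_nonneg by (auto intro: always_eventually less_le_trans)
  next
    case False
    define b where "b = max l (y a0 / 2)"
    have b: "b > 0" "b < y a0" "l \<le> b"
      using l False by (auto simp: b_def)
    have "((\<lambda>a. S a b) \<longlongrightarrow> S a0 b) (at a0)"
      using isCont_S[where f="\<lambda>a. a" and g="\<lambda>_. b" and z=a0] off_atoms_nonzero b(1)
      by (simp add: isCont_def)
    moreover have "S a0 b > 1 / t"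
      using b y_le_iff[of b a0] by auto
    ultimately have "\<forall>\<^sub>F a in at a0. S a b > 1 / t"
      by (rule order_tendstoD(1))
    then show ?thesis
    proof eventually_elim
      case (elim a)
      then have "b < y a" using y_le_iff[of b a] b(1) by linarith
      with b(3) show ?case by simp
    qed
  qed
qed

definition S2 :: "real \<Rightarrow> real \<Rightarrow> real" where
  "S2 a b = (\<Sum>j<n. 1 / ((a - x j)^2 + b^2)^2) / real n"

definition S_a :: "real \<Rightarrow> real \<Rightarrow> real" where
  "S_a a b = (\<Sum>j<n. - (2 * (a - x j)) / ((a - x j)^2 + b^2)^2) / real n"

lemma S2_pos: "off_atoms a b \<Longrightarrow> S2 a b > 0"
  unfolding S2_def using off_atoms_dist_nonzero atoms_nonempty n_pos
  by (intro divide_pos_pos sum_pos) auto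

lemma isCont_S2 [continuous_intros]:
  fixes f g :: "'a::t2_space \<Rightarrow> real"
  assumes "isCont f z" "isCont g z" "off_atoms (f z) (g z)"
  shows "isCont (\<lambda>z. S2 (f z) (g z)) z"
  unfolding S2_def
  by (intro continuous_intros assms(1,2)) (use off_atoms_dist_nonzero[OF assms(3)] n_pos in auto)

lemma isCont_S_a [continuous_intros]:
  fixes f g :: "'a::t2_space \<Rightarrow> real"
  assumes "isCont f z" "isCont g z" "off_atoms (f z) (g z)"
  shows "isCont (\<lambda>z. S_a (f z) (g z)) z"
  unfolding S_a_def
  by (intro continuous_intros assms(1,2)) (use off_atoms_dist_nonzero[OF assms(3)] n_pos in auto)

lemma isCont_R [continuous_intros]:
  fixes f g :: "'a::t2_space \<Rightarrow> real"
  assumes "isCont f z" "isCont g z" "off_atoms (f z) (g z)"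
  shows "isCont (\<lambda>z. R (f z) (g z)) z"
  unfolding R_def
  by (intro continuous_intros assms(1,2)) (use off_atoms_dist_nonzero[OF assms(3)] n_pos in auto)

lemma S_has_derivative_fst: "off_atoms a b \<Longrightarrow> ((\<lambda>a. S a b) has_real_derivative S_a a b) (at a)"
  unfolding S_def S_a_def
  by (intro DERIV_cdivide DERIV_sum DERIV_inverse_sqdist_fst off_atoms_dist_nonzero) auto

lemma S_has_derivative_snd:
  assumes "off_atoms a b"
  shows "((\<lambda>b. S a b) has_real_derivative - (2 * b * S2 a b)) (at b)"
proof -
  have "((\<lambda>b. S a b) has_real_derivative
      (\<Sum>j<n. - 2 * b * (1 / ((a - x j)^2 + b^2)^2)) / real n) (at b)"
    unfolding S_def
    by (intro DERIV_cdivide DERIV_sum DERIV_inverse_sqdist_snd off_atoms_dist_nonzero[OF assms]) auto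
  then show ?thesis
    by (rule DERIV_cong) (simp add: S2_def sum_distrib_left sum_negf)
qed

lemma R_has_derivative_fst:
  assumes "off_atoms a b"
  shows "((\<lambda>a. R a b) has_real_derivative 2 * b^2 * S2 a b - S a b) (at a)"
proof -
  have "((\<lambda>a. R a b) has_real_derivative (\<Sum>j<n. 2 * b^2 * (1 / ((a - x j)^2 + b^2)^2)
      - 1 / ((a - x j)^2 + b^2)) / real n) (at a)"
    unfolding R_def
    by (intro DERIV_cdivide DERIV_sum DERIV_ratio_sqdist_fst off_atoms_dist_nonzero[OF assms]) auto
  then show ?thesis
    by (rule DERIV_cong) (simp add: S2_def S_def sum_subtractf sum_distrib_left diff_divide_distrib)
qed

lemma R_has_derivative_snd:
  assumes "off_atoms a b"
  shows "((\<lambda>b. R a b) has_real_derivative b * S_a a b) (at b)"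
proof -
  have "((\<lambda>b. R a b) has_real_derivative
      (\<Sum>j<n. b * (- (2 * (a - x j)) / ((a - x j)^2 + b^2)^2)) / real n) (at b)"
    unfolding R_def
    by (intro DERIV_cdivide DERIV_sum DERIV_ratio_sqdist_snd off_atoms_dist_nonzero[OF assms]) auto
  then show ?thesis
    by (rule DERIV_cong) (simp add: S_a_def sum_distrib_left)
qed

section \<open>The map psi = Re H along the curve\<close>

definition psi :: "real \<Rightarrow> real" where
  "psi a = a + t * R a (y a)"

text \<open>Outside \<open>edges\<close> either y > 0, where y is differentiable by implicit differentiation of
  S a (y a) = 1/t, or y vanishes on a neighbourhood.\<close>

definition edges :: "real set" where
  "edges = {a. off_atoms a 0 \<and> S a 0 = 1 / t}"

lemma y_has_derivative_pos:
  assumes "y a0 > 0"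
  shows "(y has_real_derivative S_a a0 (y a0) / (2 * y a0 * S2 a0 (y a0))) (at a0)"
proof -
  have "\<forall>\<^sub>F a in at a0. y a > 0"
    using isCont_y[of a0] assms by (simp add: isCont_def order_tendstoD(1))
  then have "\<forall>\<^sub>F a in at a0. S a (y a) = S a0 (y a0)"
    by eventually_elim (simp add: S_at_y assms)
  moreover have "- (2 * y a0 * S2 a0 (y a0)) \<noteq> 0"
    using assms S2_pos[OF off_atoms_y[of a0]] by simp
  ultimately have "(y has_real_derivative - S_a a0 (y a0) / - (2 * y a0 * S2 a0 (y a0))) (at a0)"
    using off_atoms_y[of a0] isCont_y[of a0]
    by (intro DERIV_implicit_partials[where U="{p. off_atoms (fst p) (snd p)}" and \<Phi>=S
          and \<phi>b="\<lambda>a b. - (2 * b * S2 a b)"] open_off_atoms)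
      (auto intro!: continuous_intros S_has_derivative_fst S_has_derivative_snd)
  then show ?thesis by simp
qed

lemma y_has_derivative_zero:
  assumes "off_atoms a0 0" "S a0 0 < 1 / t"
  shows "(y has_real_derivative 0) (at a0)"
proof -
  have "\<forall>\<^sub>F a in nhds a0. off_atoms a 0"
    unfolding eventually_nhds using assms(1)
    by (intro exI[of _ "- x ` {..<n}"]) (auto simp: off_atoms_def open_Compl finite_imp_closed)
  moreover have "isCont (\<lambda>a. S a 0) a0"
    using assms(1) by (intro continuous_intros) auto
  then have "((\<lambda>a. S a 0) \<longlongrightarrow> S a0 0) (nhds a0)"
    by (metis isCont_def tendsto_at_iff_tendsto_nhds)
  then have "\<forall>\<^sub>F a in nhds a0. S a 0 < 1 / t"
    using assms(2) by (rule order_tendstoD(2))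
  ultimately have "\<forall>\<^sub>F a in nhds a0. y a = 0"
    by eventually_elim (simp add: y_eq_0_iff)
  then show ?thesis
    by (subst DERIV_cong_ev[OF refl _ refl]) auto
qed

lemma y_complementary: "y a * (S a (y a) - 1 / t) = 0"
  using y_nonneg[of a] S_at_y[of a] by (cases "y a = 0") auto

lemma y_differentiable: "a0 \<notin> edges \<Longrightarrow> \<exists>y'. (y has_real_derivative y') (at a0)"
proof (cases "y a0 > 0")
  case True
  then show ?thesis using y_has_derivative_pos by blast
next
  case False
  assume "a0 \<notin> edges"
  then have "off_atoms a0 0" "S a0 0 < 1 / t"
    using False y_nonneg[of a0] y_eq_0_iff[of a0] by (auto simp: edges_def)
  then show ?thesis using y_has_derivative_zero by blast
qed

lemma psi_has_derivative:
  assumes "(y has_real_derivative y') (at a0)"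
  shows "(psi has_real_derivative 1 + t * (2 * (y a0)^2 * S2 a0 (y a0) - S a0 (y a0)
    + y a0 * S_a a0 (y a0) * y')) (at a0)"
proof -
  have "((\<lambda>a. R a (y a)) has_real_derivative 2 * (y a0)^2 * S2 a0 (y a0) - S a0 (y a0)
      + y a0 * S_a a0 (y a0) * y') (at a0)"
    using off_atoms_y[of a0]
    by (intro DERIV_compose_partials[where U="{p. off_atoms (fst p) (snd p)}" and \<Phi>=R
          and \<phi>a="\<lambda>a b. 2 * b^2 * S2 a b - S a b" and \<phi>b="\<lambda>a b. b * S_a a b"] open_off_atoms assms)
      (auto intro!: continuous_intros R_has_derivative_fst R_has_derivative_snd)
  then show ?thesis
    unfolding psi_def by (intro derivative_eq_intros) auto
qed

text \<open>With y' = S_a / (2 y S2) one gets psi' = t (2 y^2 S2 + S_a^2 / (2 S2)) where y > 0,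
  and psi' = 1 - t S a 0 where y vanishes near a.\<close>

lemma psi_derivative_pos: "a0 \<notin> edges \<Longrightarrow> \<exists>d. (psi has_real_derivative d) (at a0) \<and> d > 0"
proof (cases "y a0 > 0")
  case True
  define b where "b = y a0"
  define y' where "y' = S_a a0 b / (2 * b * S2 a0 b)"
  have pos: "b > 0" "S2 a0 b > 0"
    using True S2_pos[OF off_atoms_y] by (simp_all add: b_def)
  have der: "(psi has_real_derivative 1 + t * (2 * b^2 * S2 a0 b - S a0 b + b * S_a a0 b * y')) (at a0)"
    using psi_has_derivative[OF y_has_derivative_pos[OF True]] by (simp add: b_def y'_def)
  have "1 + t * (2 * b^2 * S2 a0 b - S a0 b + b * S_a a0 b * y')
      = t * (2 * b^2 * S2 a0 b) + t * (b * S_a a0 b * y')"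
    using S_at_y[OF True] t_pos by (simp add: b_def algebra_simps)
  moreover have "b * S_a a0 b * y' \<ge> 0"
    using pos by (simp add: y'_def field_simps)
  ultimately have "1 + t * (2 * b^2 * S2 a0 b - S a0 b + b * S_a a0 b * y') > 0"
    using pos t_pos by (simp add: add_pos_nonneg)
  with der show ?thesis by blast
next
  case False
  assume "a0 \<notin> edges"
  then have y0: "y a0 = 0" and off: "off_atoms a0 0" and "S a0 0 < 1 / t"
    using False y_nonneg[of a0] y_eq_0_iff[of a0] by (auto simp: edges_def)
  then have "1 - t * S a0 0 > 0" using t_pos by (simp add: field_simps)
  then show ?thesis
    using psi_has_derivative[OF y_has_derivative_zero[OF off \<open>S a0 0 < 1 / t\<close>]] y0 by auto
qed

lemma isCont_psi: "isCont psi a"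
  unfolding psi_def using off_atoms_y[of a] by (intro continuous_intros isCont_y) auto

definition far_bound :: real where
  "far_bound = (\<Sum>k<n. \<bar>x k\<bar>) + sqrt t + 1"

lemma far_from_atoms:
  assumes "k < n"
  shows "far_bound \<le> a \<Longrightarrow> sqrt t + 1 \<le> a - x k" and "a \<le> - far_bound \<Longrightarrow> sqrt t + 1 \<le> x k - a"
proof -
  have "\<bar>x k\<bar> \<le> (\<Sum>k<n. \<bar>x k\<bar>)"
    using assms by (intro member_le_sum) auto
  then show "far_bound \<le> a \<Longrightarrow> sqrt t + 1 \<le> a - x k" "a \<le> - far_bound \<Longrightarrow> sqrt t + 1 \<le> x k - a"
    unfolding far_bound_def by (auto simp: abs_le_iff)
qed

lemma S_axis_far:
  assumes "far_bound \<le> a \<or> a \<le> - far_bound"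
  shows "off_atoms a 0" and "S a 0 < 1 / t"
proof -
  have far: "t < (a - x k)^2" if "k < n" for k
  proof -
    have "sqrt t + 1 \<le> \<bar>a - x k\<bar>"
      using assms far_from_atoms[OF that, of a] abs_ge_self[of "a - x k"] abs_ge_minus_self[of "a - x k"]
      by auto
    then have "(sqrt t + 1)^2 \<le> (a - x k)^2"
      by (metis power2_abs power_mono real_sqrt_ge_zero t_pos less_imp_le add_nonneg_pos zero_less_one
          less_imp_le)
    moreover have "(sqrt t + 1)^2 = t + 2 * sqrt t + 1"
      using t_pos by (simp add: power2_eq_square algebra_simps)
    ultimately show ?thesis
      using real_sqrt_ge_zero[of t] t_pos by linarith
  qed
  then show off: "off_atoms a 0"
    using t_pos by (fastforce simp: off_atoms_def)
  have "(\<Sum>k<n. 1 / ((a - x k)^2 + 0^2)) < (\<Sum>k<n. 1 / t)"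
    using atoms_nonempty far t_pos by (intro sum_strict_mono) (auto simp: frac_less2)
  then show "S a 0 < 1 / t"
    unfolding S_def using n_pos by (simp add: divide_less_eq mult.commute)
qed

lemma psi_far_right: "far_bound \<le> a \<Longrightarrow> a < psi a"
proof -
  assume a: "far_bound \<le> a"
  have "y a = 0"
    using S_axis_far[of a] a by (simp add: y_eq_0_iff)
  moreover have pos: "a - x k > 0" if "k < n" for k
    using far_from_atoms(1)[OF that a] t_pos by (smt (verit) real_sqrt_ge_zero)
  then have "(a - x k) / ((a - x k)^2 + 0^2) > 0" if "k < n" for k
    using pos[OF that] by (simp add: zero_less_divide_iff)
  then have "(\<Sum>k<n. (a - x k) / ((a - x k)^2 + 0^2)) > 0"
    using atoms_nonempty by (intro sum_pos) auto
  ultimately show ?thesis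
    unfolding psi_def R_def using t_pos n_pos by simp
qed

lemma psi_far_left: "a \<le> - far_bound \<Longrightarrow> psi a < a"
proof -
  assume a: "a \<le> - far_bound"
  have "y a = 0"
    using S_axis_far[of a] a by (simp add: y_eq_0_iff)
  moreover have neg: "a - x k < 0" if "k < n" for k
    using far_from_atoms(2)[OF that a] t_pos by (smt (verit) real_sqrt_ge_zero)
  then have "(a - x k) / ((a - x k)^2 + 0^2) < 0" if "k < n" for k
    using neg[OF that] by (simp add: divide_less_0_iff)
  then have "(\<Sum>k<n. (a - x k) / ((a - x k)^2 + 0^2)) < (\<Sum>k<n. 0)"
    using atoms_nonempty by (intro sum_strict_mono) auto
  ultimately show ?thesis
    unfolding psi_def R_def using t_pos n_pos by (simp add: mult_pos_neg divide_neg_pos)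
qed

text \<open>Clearing denominators turns S a 0 = 1/t into a polynomial equation, which is nontrivial
  because it fails far from the atoms.\<close>

lemma finite_edges: "finite edges"
proof -
  define q where "q k = [:- x k, 1:]^2" for k
  define p where "p = smult (real n) (\<Prod>k<n. q k) - smult t (\<Sum>j<n. \<Prod>k\<in>{..<n}-{j}. q k)"
  have poly_p: "poly p a = real n * (\<Prod>k<n. (a - x k)^2) * (1 - t * S a 0)" if "off_atoms a 0" for a
  proof -
    define P where "P = (\<Prod>k<n. (a - x k)^2)"
    have "(\<Prod>k\<in>{..<n}-{j}. (a - x k)^2) = P * (1 / ((a - x j)^2 + 0^2))" if "j < n" for j
    proof -
      have "P = (a - x j)^2 * (\<Prod>k\<in>{..<n}-{j}. (a - x k)^2)"
        unfolding P_def using that by (simp add: prod.remove)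
      then show ?thesis
        using off_atoms_dist_nonzero[OF \<open>off_atoms a 0\<close> that] by (simp add: field_simps)
    qed
    then have "(\<Sum>j<n. \<Prod>k\<in>{..<n}-{j}. (a - x k)^2) = (\<Sum>j<n. P * (1 / ((a - x j)^2 + 0^2)))"
      by (intro sum.cong) auto
    also have "\<dots> = P * (\<Sum>j<n. 1 / ((a - x j)^2 + 0^2))"
      by (rule sum_distrib_left[symmetric])
    also have "(\<Sum>j<n. 1 / ((a - x j)^2 + 0^2)) = real n * S a 0"
      unfolding S_def using n_pos by simp
    finally have "(\<Sum>j<n. \<Prod>k\<in>{..<n}-{j}. (a - x k)^2) = P * (real n * S a 0)" .
    then show ?thesis
      unfolding p_def P_def[symmetric] by (simp add: poly_prod poly_sum q_def P_def algebra_simps)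
  qed
  have "p \<noteq> 0"
  proof
    assume "p = 0"
    have "far_bound \<le> far_bound \<or> far_bound \<le> - far_bound" by simp
    note far = S_axis_far[OF this]
    have "(\<Prod>k<n. (far_bound - x k)^2) \<noteq> 0"
      using off_atoms_dist_nonzero[OF far(1)] by (auto simp: prod_zero_iff)
    moreover have "1 - t * S far_bound 0 \<noteq> 0"
      using far(2) t_pos by (simp add: field_simps)
    ultimately show False
      using poly_p[OF far(1)] n_pos \<open>p = 0\<close> by simp
  qed
  moreover have "edges \<subseteq> {a. poly p a = 0}"
    using poly_p t_pos by (auto simp: edges_def)
  ultimately show ?thesis
    by (metis finite_subset poly_roots_finite)
qed

lemma psi_strict_mono: "a < b \<Longrightarrow> psi a < psi b"
  by (erule DERIV_pos_imp_increasing_finite_exceptions[OF _ finite_edges])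
    (simp_all add: continuous_at_imp_continuous_on isCont_psi psi_derivative_pos)

lemma psi_surj: "\<exists>a. psi a = c"
proof -
  define a1 where "a1 = min c (- far_bound)"
  define a2 where "a2 = max c far_bound"
  have "psi a1 \<le> c" "c \<le> psi a2"
    using psi_far_left[of a1] psi_far_right[of a2] by (simp_all add: a1_def a2_def)
  moreover have "a1 \<le> a2" by (simp add: a1_def a2_def)
  moreover have "continuous_on {a1..a2} psi"
    by (simp add: continuous_at_imp_continuous_on isCont_psi)
  ultimately show ?thesis
    using IVT'[of psi a1 c a2] by blast
qed

section \<open>The real part of the phase\<close>

definition rephi :: "real \<Rightarrow> real \<Rightarrow> real \<Rightarrow> real" where
  "rephi c a b = real n / (2 * t) * ((a - c)^2 - b^2) + (\<Sum>j<n. ln ((a - x j)^2 + b^2)) / 2"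

lemma rephi_has_derivative_fst:
  assumes "off_atoms a b"
  shows "((\<lambda>a. rephi c a b) has_real_derivative real n * ((a - c) / t + R a b)) (at a)"
proof -
  have ln: "((\<lambda>a. (\<Sum>j<n. ln ((a - x j)^2 + b^2)) / 2) has_real_derivative
      (\<Sum>j<n. 2 * ((a - x j) / ((a - x j)^2 + b^2))) / 2) (at a)"
    by (rule DERIV_cdivide, rule DERIV_sum, rule DERIV_ln_sqdist_fst, rule off_atoms_dist_pos[OF assms]) simp
  have quad: "((\<lambda>a. real n / (2 * t) * ((a - c)^2 - b^2)) has_real_derivative
      real n / (2 * t) * (2 * (a - c))) (at a)"
    using t_nonzero by (auto intro!: derivative_eq_intros)
  have eq: "real n / (2 * t) * (2 * (a - c)) + (\<Sum>j<n. 2 * ((a - x j) / ((a - x j)^2 + b^2))) / 2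
      = real n * ((a - c) / t + R a b)"
  proof -
    have "(\<Sum>j<n. 2 * ((a - x j) / ((a - x j)^2 + b^2))) = 2 * (real n * R a b)"
      by (subst sum_distrib_left[symmetric]) (use n_pos in \<open>simp add: R_def\<close>)
    then show ?thesis using t_nonzero by (simp add: field_simps)
  qed
  show ?thesis
    unfolding rephi_def using DERIV_cong[OF DERIV_add[OF quad ln] eq] .
qed

lemma rephi_has_derivative_snd:
  assumes "off_atoms a b"
  shows "((\<lambda>b. rephi c a b) has_real_derivative real n * b * (S a b - 1 / t)) (at b)"
proof -
  have ln: "((\<lambda>b. (\<Sum>j<n. ln ((a - x j)^2 + b^2)) / 2) has_real_derivative
      (\<Sum>j<n. 2 * b * (1 / ((a - x j)^2 + b^2))) / 2) (at b)"
    by (rule DERIV_cdivide, rule DERIV_sum, rule DERIV_ln_sqdist_snd, rule off_atoms_dist_pos[OF assms]) simp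
  have quad: "((\<lambda>b. real n / (2 * t) * ((a - c)^2 - b^2)) has_real_derivative
      real n / (2 * t) * (- 2 * b)) (at b)"
    using t_nonzero by (auto intro!: derivative_eq_intros)
  have eq: "real n / (2 * t) * (- 2 * b) + (\<Sum>j<n. 2 * b * (1 / ((a - x j)^2 + b^2))) / 2
      = real n * b * (S a b - 1 / t)"
  proof -
    have "(\<Sum>j<n. 2 * b * (1 / ((a - x j)^2 + b^2))) = 2 * b * (real n * S a b)"
      by (subst sum_distrib_left[symmetric]) (use n_pos in \<open>simp add: S_def\<close>)
    then show ?thesis using t_nonzero by (simp add: field_simps)
  qed
  show ?thesis
    unfolding rephi_def using DERIV_cong[OF DERIV_add[OF quad ln] eq] .
qed

lemma rephi_strict_mono_snd:
  assumes "0 \<le> b1" "b1 < b2" "b2 \<le> y a" "off_atoms a b1"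
  shows "rephi c a b1 < rephi c a b2"
proof (rule DERIV_pos_imp_increasing_open[OF assms(2)])
  fix s assume s: "b1 < s" "s < b2"
  then have "s > 0" "S a s > 1 / t"
    using assms y_le_iff[of s a] by auto
  then show "\<exists>d. ((\<lambda>b. rephi c a b) has_real_derivative d) (at s) \<and> d > 0"
    using rephi_has_derivative_snd[OF off_atoms_nonzero[of s a], of c] n_pos by auto
next
  have "off_atoms a s" if "s \<in> {b1..b2}" for s
    using that assms(4) off_atoms_nonzero[of s a] assms(1) by (cases "s = b1") auto
  then show "continuous_on {b1..b2} (\<lambda>b. rephi c a b)"
    by (intro continuous_at_imp_continuous_on ballI DERIV_isCont[OF rephi_has_derivative_snd])
qed

lemma rephi_strict_antimono_snd:
  assumes "y a \<le> b1" "b1 < b2"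
  shows "rephi c a b2 < rephi c a b1"
proof (rule DERIV_neg_imp_decreasing_open[OF assms(2)])
  fix s assume s: "b1 < s" "s < b2"
  then have "s > 0" "S a s < 1 / t"
    using assms y_nonneg[of a] y_less_iff[of s a] by auto
  then show "\<exists>d. ((\<lambda>b. rephi c a b) has_real_derivative d) (at s) \<and> d < 0"
    using rephi_has_derivative_snd[OF off_atoms_nonzero[of s a], of c] n_pos
    by (auto intro!: mult_pos_neg)
next
  have "off_atoms a s" if "s \<in> {b1..b2}" for s
    using that assms(1) off_atoms_y[of a] off_atoms_nonzero[of s a] y_nonneg[of a]
    by (cases "s = y a") auto
  then show "continuous_on {b1..b2} (\<lambda>b. rephi c a b)"
    by (intro continuous_at_imp_continuous_on ballI DERIV_isCont[OF rephi_has_derivative_snd])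
qed

lemma vertical_profile:
  fixes a c :: real
  defines "h \<equiv> \<lambda>b. if off_atoms a b then ereal (rephi c a b) else -\<infinity>"
  shows "is_local_max_on {0..} h (y a)" and "\<And>b. is_local_max_on {0..} h b \<Longrightarrow> b = y a"
    and "strict_mono_on {0<..<y a} h" and "strict_antimono_on {y a<..} h"
proof -
  have inc: "h b1 < h b2" if "0 \<le> b1" "b1 < b2" "b2 \<le> y a" for b1 b2
  proof (cases "off_atoms a b1")
    case True
    then show ?thesis
      using rephi_strict_mono_snd[OF that True] off_atoms_nonzero[of b2 a] that by (simp add: h_def)
  qed (use off_atoms_nonzero[of b2 a] that in \<open>simp add: h_def\<close>)
  have "off_atoms a b" if "y a \<le> b" for b
    using that off_atoms_y[of a] off_atoms_nonzero[of b a] y_nonneg[of a] by (cases "b = y a") auto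
  then have dec: "h b2 < h b1" if "y a \<le> b1" "b1 < b2" for b1 b2
    using that rephi_strict_antimono_snd[OF that] by (simp add: h_def)
  show "is_local_max_on {0..} h (y a)"
    by (rule local_max_of_increasing_decreasing(1)[where f=h, OF y_nonneg inc dec])
  show "\<And>b. is_local_max_on {0..} h b \<Longrightarrow> b = y a"
    by (rule local_max_of_increasing_decreasing(2)[where f=h, OF y_nonneg inc dec])
  show "strict_mono_on {0<..<y a} h"
    by (rule local_max_of_increasing_decreasing(3)[where f=h, OF y_nonneg inc dec])
  show "strict_antimono_on {y a<..} h"
    by (rule local_max_of_increasing_decreasing(4)[where f=h, OF y_nonneg inc dec])
qed

lemma isCont_rephi_curve: "isCont (\<lambda>a. rephi c a (y a)) a"
  unfolding rephi_def using off_atoms_y[of a]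
  by (intro continuous_intros isCont_y) (auto simp: off_atoms_def t_nonzero)

text \<open>The b-derivative of the phase vanishes along the curve (\<open>y_complementary\<close>), so only the
  a-derivative contributes.\<close>

lemma rephi_curve_has_derivative:
  assumes "a0 \<notin> edges"
  shows "((\<lambda>a. rephi c a (y a)) has_real_derivative real n / t * (psi a0 - c)) (at a0)"
proof -
  obtain y' where y': "(y has_real_derivative y') (at a0)"
    using y_differentiable[OF assms] by blast
  have "((\<lambda>a. rephi c a (y a)) has_real_derivative real n * ((a0 - c) / t + R a0 (y a0))
      + real n * y a0 * (S a0 (y a0) - 1 / t) * y') (at a0)"
    using off_atoms_y[of a0]
    by (intro DERIV_compose_partials[where U="{p. off_atoms (fst p) (snd p)}" and \<Phi>="rephi c"
          and \<phi>a="\<lambda>a b. real n * ((a - c) / t + R a b)" and \<phi>b="\<lambda>a b. real n * b * (S a b - 1 / t)"]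
        open_off_atoms y')
      (use t_nonzero in \<open>auto intro!: continuous_intros rephi_has_derivative_fst rephi_has_derivative_snd\<close>)
  moreover have "real n * ((a0 - c) / t + R a0 (y a0)) + real n * y a0 * (S a0 (y a0) - 1 / t) * y'
      = real n / t * (psi a0 - c)"
    using y_complementary[of a0] t_nonzero by (simp add: psi_def field_simps)
  ultimately show ?thesis by (rule DERIV_cong)
qed

lemma rephi_curve_decreasing:
  assumes "a1 < a2" "a2 \<le> m" "psi m = c"
  shows "rephi c a2 (y a2) < rephi c a1 (y a1)"
proof (rule DERIV_neg_imp_decreasing_finite_exceptions[OF assms(1) finite_edges])
  show "continuous_on {a1..a2} (\<lambda>a. rephi c a (y a))"
    by (simp add: continuous_at_imp_continuous_on isCont_rephi_curve)
  fix s assume "a1 < s" "s < a2" "s \<notin> edges"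
  moreover have "psi s < c"
    using psi_strict_mono[of s m] assms \<open>s < a2\<close> by simp
  then have "real n / t * (psi s - c) < 0"
    using n_pos t_pos by (intro mult_pos_neg divide_pos_pos) simp_all
  ultimately show "\<exists>d. ((\<lambda>a. rephi c a (y a)) has_real_derivative d) (at s) \<and> d < 0"
    using rephi_curve_has_derivative by blast
qed

lemma rephi_curve_increasing:
  assumes "m \<le> a1" "a1 < a2" "psi m = c"
  shows "rephi c a1 (y a1) < rephi c a2 (y a2)"
proof (rule DERIV_pos_imp_increasing_finite_exceptions[OF assms(2) finite_edges])
  show "continuous_on {a1..a2} (\<lambda>a. rephi c a (y a))"
    by (simp add: continuous_at_imp_continuous_on isCont_rephi_curve)
  fix s assume "a1 < s" "s < a2" "s \<notin> edges"
  moreover have "psi s > c"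
    using psi_strict_mono[of m s] assms \<open>a1 < s\<close> by simp
  then have "real n / t * (psi s - c) > 0"
    using n_pos t_pos by simp
  ultimately show "\<exists>d. ((\<lambda>a. rephi c a (y a)) has_real_derivative d) (at s) \<and> d > 0"
    using rephi_curve_has_derivative by blast
qed

lemma horizontal_profile:
  fixes c m :: real
  defines "f \<equiv> \<lambda>a. ereal (rephi c a (y a))"
  assumes "psi m = c"
  shows "is_local_min_on UNIV f m" and "\<And>a. is_local_min_on UNIV f a \<Longrightarrow> a = m"
    and "strict_antimono_on {..<m} f" and "strict_mono_on {m<..} f"
proof -
  have dec: "f b < f a" if "a < b" "b \<le> m" for a b
    using rephi_curve_decreasing[OF that assms(2)] by (simp add: f_def)
  have inc: "f a < f b" if "m \<le> a" "a < b" for a b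
    using rephi_curve_increasing[OF that assms(2)] by (simp add: f_def)
  show "is_local_min_on UNIV f m"
    by (rule local_min_of_decreasing_increasing(1)[where f=f, OF dec inc])
  show "\<And>a. is_local_min_on UNIV f a \<Longrightarrow> a = m"
    by (rule local_min_of_decreasing_increasing(2)[where f=f, OF dec inc])
  show "strict_antimono_on {..<m} f"
    by (rule local_min_of_decreasing_increasing(3)[where f=f, OF dec inc])
  show "strict_mono_on {m<..} f"
    by (rule local_min_of_decreasing_increasing(4)[where f=f, OF dec inc])
qed

lemma Gmu_Complex: "off_atoms a b \<Longrightarrow> Gmu n x (Complex a b) = Complex (R a b) (- b * S a b)"
proof -
  assume off: "off_atoms a b"
  have "1 / (Complex a b - complex_of_real (x j))
      = Complex ((a - x j) / ((a - x j)^2 + b^2)) (- b / ((a - x j)^2 + b^2))" if "j < n" for j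
    using off_atoms_dist_nonzero[OF off that]
    by (simp add: complex_eq_iff Re_divide Im_divide power2_eq_square)
  then have sum: "(\<Sum>j<n. 1 / (Complex a b - complex_of_real (x j)))
      = (\<Sum>j<n. Complex ((a - x j) / ((a - x j)^2 + b^2)) (- b / ((a - x j)^2 + b^2)))"
    by (intro sum.cong) auto
  have "Re (\<Sum>j<n. 1 / (Complex a b - complex_of_real (x j))) = real n * R a b"
    unfolding sum Re_sum R_def using n_pos by simp
  moreover have "Im (\<Sum>j<n. 1 / (Complex a b - complex_of_real (x j))) = - b * (real n * S a b)"
  proof -
    have "b * (real n * S a b) = b * (\<Sum>j<n. 1 / ((a - x j)^2 + b^2))"
      unfolding S_def using n_pos by simp
    then show ?thesis
      unfolding sum Im_sum by (simp add: sum_distrib_left sum_negf)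
  qed
  ultimately show ?thesis
    unfolding Gmu_def using n_pos by (simp add: complex_eq_iff)
qed

lemma Hmu_curve: "Hmu n x t (Complex a (y a)) = complex_of_real (psi a)"
  using Gmu_Complex[OF off_atoms_y[of a]] y_complementary[of a] t_nonzero
  by (simp add: Hmu_def psi_def complex_eq_iff field_simps)

lemma Fmu_eq_curve_point:
  assumes "psi m = c"
  shows "Fmu n x t c = Complex m (y m)"
  unfolding Fmu_def
proof (rule the_equality)
  show "Complex m (y m) \<in> ycurve n x t \<and> Hmu n x t (Complex m (y m)) = complex_of_real c"
    using Hmu_curve assms by (auto simp: ycurve_def y_def)
next
  fix z assume z: "z \<in> ycurve n x t \<and> Hmu n x t z = complex_of_real c"
  then obtain a where a: "z = Complex a (y a)"
    by (auto simp: ycurve_def y_def)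
  then have "psi a = psi m"
    using z Hmu_curve assms by simp
  then have "a = m"
    using psi_strict_mono by (metis linorder_neqE_linordered_idom less_irrefl)
  with a show "z = Complex m (y m)" by simp
qed

lemma RePhi_eq_rephi:
  assumes "tn tcr c2 n \<tau> = t"
  shows "RePhi n x tcr c2 G0 xstar \<tau> (Complex a b) v =
    (if off_atoms a b then ereal (rephi (xn xstar G0 tcr c2 n \<tau> + v / (c2 * real n powr (2/3))) a b)
     else -\<infinity>)"
proof (cases "off_atoms a b")
  case False
  then show ?thesis
    by (auto simp: RePhi_def off_atoms_def complex_eq_iff)
next
  case True
  have "Re (Ln (Complex a b - complex_of_real (x j))) = ln ((a - x j)^2 + b^2) / 2" if "j < n" for j
  proof -
    have pos: "0 < (a - x j)^2 + b^2"
      using off_atoms_dist_pos[OF True that] .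
    then have "Complex (a - x j) b \<noteq> 0"
      by (auto simp: complex_eq_iff)
    moreover have "Complex a b - complex_of_real (x j) = Complex (a - x j) b"
      by (simp add: complex_eq_iff)
    ultimately show ?thesis
      using pos by (simp add: Re_Ln complex_norm ln_sqrt)
  qed
  then have "(\<Sum>j<n. Re (Ln (Complex a b - complex_of_real (x j))))
      = (\<Sum>j<n. ln ((a - x j)^2 + b^2) / 2)"
    by (intro sum.cong) auto
  moreover have "of_nat n * gmu n x (Complex a b) = (\<Sum>j<n. Ln (Complex a b - complex_of_real (x j)))"
    using n_pos by (simp add: gmu_def)
  ultimately have gmu: "Re (of_nat n * gmu n x (Complex a b)) = (\<Sum>j<n. ln ((a - x j)^2 + b^2)) / 2"
    by (simp add: Re_sum sum_divide_distrib)
  define c where "c = xn xstar G0 tcr c2 n \<tau> + v / (c2 * real n powr (2/3))"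
  have "Complex a b - complex_of_real (xn xstar G0 tcr c2 n \<tau>)
      - complex_of_real (v / (c2 * real n powr (2/3))) = Complex (a - c) b"
    by (simp add: c_def complex_eq_iff)
  then have "Re (phi n x tcr c2 G0 xstar \<tau> (Complex a b) v)
      = real n / (2 * t) * Re ((Complex (a - c) b)^2) + Re (of_nat n * gmu n x (Complex a b))"
    unfolding phi_def assms by simp
  also have "\<dots> = rephi c a b"
    unfolding gmu rephi_def by (simp add: power2_eq_square)
  finally have "Re (phi n x tcr c2 G0 xstar \<tau> (Complex a b) v) = rephi c a b" .
  moreover have "\<not> (\<exists>j<n. Complex a b = complex_of_real (x j))"
    using True by (auto simp: off_atoms_def complex_eq_iff)
  ultimately show ?thesis
    using True by (simp add: RePhi_def c_def)
qed

end

theorem lemma3p3: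
  fixes n :: nat and x :: "nat \<Rightarrow> real"
    and tcr c2 G0 xstar \<tau> u v :: real
  assumes "n \<ge> 1" and "tcr > 0" and "c2 > 0"
    and "tn tcr c2 n \<tau> > 0"
  shows
   "(let t = tn tcr c2 n \<tau>;
         w = Fmu n x t (xn xstar G0 tcr c2 n \<tau> + u / (c2 * real n powr (2/3)));
         f = (\<lambda>a. RePhi n x tcr c2 G0 xstar \<tau> (Complex a (ymu n x t a)) u)
     in is_local_min_on UNIV f (Re w)
        \<and> (\<forall>a. is_local_min_on UNIV f a \<longrightarrow> a = Re w)
        \<and> strict_antimono_on {..<Re w} f
        \<and> strict_mono_on {Re w<..} f)
    \<and> (\<forall>a. let t = tn tcr c2 n \<tau>;
              h = (\<lambda>b. RePhi n x tcr c2 G0 xstar \<tau> (Complex a b) v)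
          in is_local_max_on {0..} h (ymu n x t a)
             \<and> (\<forall>b. is_local_max_on {0..} h b \<longrightarrow> b = ymu n x t a)
             \<and> strict_mono_on {0<..<ymu n x t a} h
             \<and> strict_antimono_on {ymu n x t a<..} h)"
proof -
  define t where "t = tn tcr c2 n \<tau>"
  interpret atom_curve n x t
    using assms by unfold_locales (simp_all add: t_def)
  define cu where "cu = xn xstar G0 tcr c2 n \<tau> + u / (c2 * real n powr (2/3))"
  obtain m where m: "psi m = cu"
    using psi_surj by blast
  have f: "(\<lambda>a. RePhi n x tcr c2 G0 xstar \<tau> (Complex a (y a)) u) = (\<lambda>a. ereal (rephi cu a (y a)))"
    by (simp add: RePhi_eq_rephi[OF t_def[symmetric]] cu_def off_atoms_y)
  have h: "(\<lambda>b. RePhi n x tcr c2 G0 xstar \<tau> (Complex a b) v)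
      = (\<lambda>b. if off_atoms a b
           then ereal (rephi (xn xstar G0 tcr c2 n \<tau> + v / (c2 * real n powr (2/3))) a b)
           else -\<infinity>)" for a
    by (simp add: RePhi_eq_rephi[OF t_def[symmetric]])
  show ?thesis
    unfolding Let_def t_def[symmetric] cu_def[symmetric] y_def[symmetric] f h Fmu_eq_curve_point[OF m]
      complex.sel(1)
    by (intro conjI allI impI horizontal_profile[OF m] vertical_profile)
qed

end
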